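(* Let $k$ be a positive integer and $I=\{1,3,5,\ldots,2k+1\}$ (so that $s(I)=k$), with Naruse-Newton coefficients $(C_0,C_1,\ldots,C_k)$. Then $C_0=C_1>C_2>\cdots>C_k$.
   Context: Partitions are drawn as Young diagrams $\mathbb{D}(\lambda)$ in English notation; $c_{i,j}$ is the cell in row $i$, column $j$. The hook length $h_\lambda(c)$ is the number of cells of $\mathbb{D}(\lambda)$ weakly right of $c$ in its row or weakly below $c$ in its column (counting $c$ once). For $\mu\subseteq\lambda$, an excited diagram of $\lambda/\mu$ is a subset of $\mathbb{D}(\lambda)$ obtained from $\mathbb{D}(\mu)$ by repeatedly replacing a cell $c_{i,j}\in D$ by $c_{i+1,j+1}$, allowed iff $c_{i+1,j+1}\in\mathbb{D}(\lambda)$ and none of $c_{i,j+1},c_{i+1,j},c_{i+1,j+1}$ lies in $D$; $\mathbb{E}(\lambda/\mu)$ is their set. A ribbon with $n$ cells is read from its lower-left to its upper-right cell, each successive cell directly right of or directly above the previous; it corresponds to the set of $i\in\{1,\ldots,n-1\}$ with cell $i$ directly below cell $i+1$. A descent set is a non-empty finite set $I$ of positive integers; $\lambda^I$ is the unique partition with $\lambda^I_1=\lambda^I_2$ such that the cells $c_{i,j}\in\mathbb{D}(\lambda^I)$ with fewer than three of $c_{i,j+1},c_{i+1,j},c_{i+1,j+1}$ in $\mathbb{D}(\lambda^I)$ form a ribbon corresponding to $I$; this ribbon is $\mathbb{D}(\lambda^I)\setminus\mathbb{D}(\mu^I)$ for a partition $\mu^I$. Let $s(I)=\lambda^I_1-1$.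 Naruse-Newton coefficients: every excited diagram of $\lambda^I/\mu^I$ meets row 1 in $\{c_{1,1},\ldots,c_{1,r}\}$, $0\le r\le s$; for $0\le j\le s(I)$, $C_j(I)=\sum_D\prod_{c\in D,\,c\notin\text{row }1}h_{\lambda^I}(c)$, summed over $D\in\mathbb{E}(\lambda^I/\mu^I)$ with exactly $s-j$ cells in row 1. (For $I=\{1,3,5\}$: $\lambda^I=(3,3,2,1)$ and $(C_0,C_1,C_2)=(6,6,3)$.) *)

theory Defs
  imports Main
begin

(* Cells are pairs (row, column), 1-indexed, English notation:
   row index grows downwards, column index grows to the right. *)
type_synonym cell = "nat \<times> nat"

definition is_partition :: "nat list \<Rightarrow> bool" where
  "is_partition lam \<longleftrightarrow> sorted_wrt (\<ge>) lam \<and> 0 \<notin> set lam"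

definition part :: "nat list \<Rightarrow> nat \<Rightarrow> nat" where
  "part lam i = (if 1 \<le> i \<and> i \<le> length lam then lam ! (i - 1) else 0)"

definition diagram :: "nat list \<Rightarrow> cell set" where
  "diagram lam = {(i, j). 1 \<le> i \<and> i \<le> length lam \<and> 1 \<le> j \<and> j \<le> part lam i}"

definition hook :: "nat list \<Rightarrow> cell \<Rightarrow> nat" where
  "hook lam c = card {(i', j') \<in> diagram lam.
      (i' = fst c \<and> j' \<ge> snd c) \<or> (j' = snd c \<and> i' \<ge> fst c)}"

inductive_set excited :: "nat list \<Rightarrow> nat list \<Rightarrow> cell set set"
  for lam mu where
  base: "diagram mu \<in> excited lam mu"
| move: "\<lbrakk> D \<in> excited lam mu; (i, j) \<in> D; (i + 1, j + 1) \<in> diagram lam;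
           (i, j + 1) \<notin> D; (i + 1, j) \<notin> D; (i + 1, j + 1) \<notin> D \<rbrakk>
         \<Longrightarrow> insert (i + 1, j + 1) (D - {(i, j)}) \<in> excited lam mu"

definition rim :: "nat list \<Rightarrow> cell set" where
  "rim lam = {(i, j) \<in> diagram lam.
     card ({(i, j + 1), (i + 1, j), (i + 1, j + 1)} \<inter> diagram lam) < 3}"

(* R is a ribbon with n = card R cells corresponding to the descent set I:
   its cells c 1, ..., c n are read from lower-left to upper-right, each
   successive cell directly right of or directly above the previous, and I is
   the set of t in {1..n-1} with cell t directly below cell t+1. *)
definition ribbon_for :: "nat set \<Rightarrow> cell set \<Rightarrow> bool" where
  "ribbon_for I R \<longleftrightarrow> (\<exists>c :: nat \<Rightarrow> cell.
     R = c ` {1..card R} \<and>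
     (\<forall>t \<in> {1..<card R}.
        c (Suc t) = (fst (c t), snd (c t) + 1) \<or>
        (fst (c t) \<ge> 1 \<and> c (Suc t) = (fst (c t) - 1, snd (c t)))) \<and>
     I = {t \<in> {1..<card R}. c (Suc t) = (fst (c t) - 1, snd (c t))})"

definition lambdaI :: "nat set \<Rightarrow> nat list" where
  "lambdaI I = (THE lam. is_partition lam \<and> part lam 1 = part lam 2 \<and>
                         ribbon_for I (rim lam))"

definition muI :: "nat set \<Rightarrow> nat list" where
  "muI I = (THE mu. is_partition mu \<and>
                    diagram mu = diagram (lambdaI I) - rim (lambdaI I))"

definition sI :: "nat set \<Rightarrow> nat" where
  "sI I = part (lambdaI I) 1 - 1"

definition NN_coeff :: "nat set \<Rightarrow> nat \<Rightarrow> nat" where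
  "NN_coeff I j = (\<Sum>D \<in> {D \<in> excited (lambdaI I) (muI I).
                           card {c \<in> D. fst c = 1} = sI I - j}.
                     \<Prod>c \<in> {c \<in> D. fst c \<noteq> 1}. hook (lambdaI I) c)"

end

(* For I = {1,3,...,2k+1} one has lambda^I = (k+1,k+1,k,...,1) and mu^I = (k,...,1).
   An excited diagram of lambda^I/mu^I is the complement in lambda^I of a lattice path from
   (k+2,1) to (1,k+1) inside lambda^I.  Recording the height k+3-i-j of the cells (i,j) along
   the path turns it into a nonnegative walk with up and down steps, and a cell at height h
   below the first row has hook length 2h+1.  If the last up step of the path is followed by
   j right steps, exactly k-j cells of the first row are left uncovered, so C_j = H V(2k-j, j),
   where H is the product of the hook lengths below the first row and V(L,x) is the sum of
   1/prod(2h+1) over the nonnegative walks of length L from 0 to x.  The recursion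
   V(L+1,0) = V(L,1) gives C_0 = C_1, and the inequality V(L,x-1) >= (2x+1) V(L,x+1), proved
   by induction on L, gives V(L+1,x) > V(L,x+1), that is C_j > C_(j+1). *)

theory Submission
  imports Defs Complex_Main
begin

section \<open>Nonnegative walks weighted by hook lengths\<close>

abbreviation ups :: "bool list \<Rightarrow> nat" where
  "ups s \<equiv> length (filter (\<lambda>b. b) s)"

abbreviation rights :: "bool list \<Rightarrow> nat" where
  "rights s \<equiv> length (filter Not s)"

lemma ups_add_rights: "ups s + rights s = length s"
  by (induction s) auto

fun nonneg_walk :: "nat \<Rightarrow> bool list \<Rightarrow> bool" where
  "nonneg_walk h [] = True"
| "nonneg_walk h (b # s) = (if b then nonneg_walk (Suc h) s else 0 < h \<and> nonneg_walk (h - 1) s)"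

fun walk_end :: "nat \<Rightarrow> bool list \<Rightarrow> nat" where
  "walk_end h [] = h"
| "walk_end h (b # s) = walk_end (if b then Suc h else h - 1) s"

fun hook_weight :: "nat \<Rightarrow> bool list \<Rightarrow> nat" where
  "hook_weight h [] = 2 * h + 1"
| "hook_weight h (b # s) = (2 * h + 1) * hook_weight (if b then Suc h else h - 1) s"

lemma nonneg_walk_append:
  "nonneg_walk h (a @ b) \<longleftrightarrow> nonneg_walk h a \<and> nonneg_walk (walk_end h a) b"
  by (induction a arbitrary: h) auto

lemma walk_end_append: "walk_end h (a @ b) = walk_end (walk_end h a) b"
  by (induction a arbitrary: h) auto

lemma walk_end_count: "nonneg_walk h w \<Longrightarrow> walk_end h w + rights w = h + ups w"
  by (induction w arbitrary: h) auto

lemma walk_end_replicate_True: "walk_end h (replicate q True) = h + q"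
  by (induction q arbitrary: h) auto

lemma nonneg_walk_replicate_False: "nonneg_walk h (replicate p False) \<longleftrightarrow> p \<le> h"
proof (induction p arbitrary: h)
  case (Suc p)
  then show ?case by (cases h) simp_all
qed simp

lemma ups_replicate: "ups (replicate n b) = (if b then n else 0)"
  by (induction n) auto

lemma sorted_or_first_descent:
  "(\<exists>p r. s = replicate p False @ replicate r True) \<or>
   (\<exists>p q b. s = replicate p False @ replicate q True @ True # False # b)"
proof (induction s)
  case Nil
  show ?case
    by (intro disjI1 exI[of _ 0]) simp
next
  case (Cons x s)
  from Cons.IH show ?case
  proof (elim disjE exE)
    fix p r assume s: "s = replicate p False @ replicate r True"
    consider "\<not> x" | "x" "p = 0" | p' where "x" "p = Suc p'"
      by (cases p) auto
    then show ?case
    proof cases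
      case 1
      then show ?thesis using s by (intro disjI1 exI[of _ "Suc p"] exI[of _ r]) simp
    next
      case 2
      then show ?thesis using s by (intro disjI1 exI[of _ 0] exI[of _ "Suc r"]) simp
    next
      case 3
      then show ?thesis using s by (intro disjI2 exI[of _ 0] exI[of _ 0]) simp
    qed
  next
    fix p q b assume s: "s = replicate p False @ replicate q True @ True # False # b"
    consider "\<not> x" | "x" "p = 0" | p' where "x" "p = Suc p'"
      by (cases p) auto
    then show ?case
    proof cases
      case 1
      then show ?thesis using s by (intro disjI2 exI[of _ "Suc p"] exI[of _ q] exI[of _ b]) simp
    next
      case 2
      then show ?thesis using s by (intro disjI2 exI[of _ 0] exI[of _ "Suc q"] exI[of _ b]) simp
    next
      case 3
      then show ?thesis using s by (intro disjI2 exI[of _ 0] exI[of _ 0]) simp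
    qed
  qed
qed

fun walk_area :: "nat \<Rightarrow> bool list \<Rightarrow> nat" where
  "walk_area h [] = 0"
| "walk_area h (b # s) = (if b then Suc h else h - 1) + walk_area (if b then Suc h else h - 1) s"

lemma walk_area_append: "walk_area h (a @ b) = walk_area h a + walk_area (walk_end h a) b"
  by (induction a arbitrary: h) auto

lemma hook_weight_snoc: "hook_weight h (a @ [b]) = hook_weight h a * (2 * walk_end h (a @ [b]) + 1)"
proof (induction a arbitrary: h)
  case (Cons c a)
  show ?case by (simp only: hook_weight.simps append_Cons walk_end.simps Cons.IH mult.assoc)
qed simp

lemma hook_weight_pos: "hook_weight h s > 0"
  by (induction s arbitrary: h) auto

definition dyck_prefixes :: "nat \<Rightarrow> nat \<Rightarrow> bool list set" where
  "dyck_prefixes L x = {w. length w = L \<and> nonneg_walk 0 w \<and> walk_end 0 w = x}"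

definition weight_sum :: "nat \<Rightarrow> nat \<Rightarrow> real" where
  "weight_sum L x = (\<Sum>w\<in>dyck_prefixes L x. 1 / real (hook_weight 0 w))"

lemma finite_dyck_prefixes: "finite (dyck_prefixes L x)"
proof (rule finite_subset)
  show "dyck_prefixes L x \<subseteq> {w. set w \<subseteq> UNIV \<and> length w = L}"
    unfolding dyck_prefixes_def by auto
qed (rule finite_lists_length_eq, simp)

lemma weight_sum_0: "weight_sum 0 x = (if x = 0 then 1 else 0)"
proof -
  have "dyck_prefixes 0 x = (if x = 0 then {[]} else {})"
    unfolding dyck_prefixes_def by auto
  then show ?thesis
    unfolding weight_sum_def by simp
qed

lemma weight_sum_nonneg: "weight_sum L x \<ge> 0"
  unfolding weight_sum_def by (intro sum_nonneg) simp

lemma dyck_prefixes_Suc: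
  "dyck_prefixes (Suc L) x =
     (\<lambda>w. w @ [True]) ` {w \<in> dyck_prefixes L (x - 1). 0 < x}
     \<union> (\<lambda>w. w @ [False]) ` dyck_prefixes L (Suc x)"
proof (intro set_eqI iffI)
  fix w assume "w \<in> dyck_prefixes (Suc L) x"
  then have w: "length w = Suc L" "nonneg_walk 0 w" "walk_end 0 w = x"
    unfolding dyck_prefixes_def by auto
  then obtain u b where u: "w = u @ [b]" by (metis length_Suc_conv_rev)
  show "w \<in> (\<lambda>w. w @ [True]) ` {w \<in> dyck_prefixes L (x - 1). 0 < x}
            \<union> (\<lambda>w. w @ [False]) ` dyck_prefixes L (Suc x)"
    using w unfolding u
    by (cases b) (auto simp: dyck_prefixes_def walk_end_append nonneg_walk_append)
next
  fix w assume "w \<in> (\<lambda>w. w @ [True]) ` {w \<in> dyck_prefixes L (x - 1). 0 < x}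
                    \<union> (\<lambda>w. w @ [False]) ` dyck_prefixes L (Suc x)"
  then show "w \<in> dyck_prefixes (Suc L) x"
    by (auto simp: dyck_prefixes_def nonneg_walk_append walk_end_append)
qed

lemma weight_sum_Suc:
  "weight_sum (Suc L) x =
     ((if x = 0 then 0 else weight_sum L (x - 1)) + weight_sum L (Suc x)) / (2 * real x + 1)"
proof -
  let ?up = "(\<lambda>w. w @ [True]) ` {w \<in> dyck_prefixes L (x - 1). 0 < x}"
  let ?down = "(\<lambda>w. w @ [False]) ` dyck_prefixes L (Suc x)"
  have weight: "1 / real (hook_weight 0 (w @ [b])) = 1 / real (hook_weight 0 w) / (2 * real x + 1)"
    if "walk_end 0 (w @ [b]) = x" for w b
    using that by (simp add: hook_weight_snoc algebra_simps)
  have "weight_sum (Suc L) x =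
          (\<Sum>w\<in>?up. 1 / real (hook_weight 0 w)) + (\<Sum>w\<in>?down. 1 / real (hook_weight 0 w))"
    unfolding weight_sum_def dyck_prefixes_Suc
    by (intro sum.union_disjoint) (auto simp: finite_dyck_prefixes)
  also have "(\<Sum>w\<in>?up. 1 / real (hook_weight 0 w))
           = (\<Sum>w\<in>{w \<in> dyck_prefixes L (x - 1). 0 < x}. 1 / real (hook_weight 0 w) / (2 * real x + 1))"
    by (subst sum.reindex) (auto simp: inj_on_def dyck_prefixes_def walk_end_append weight
                                 intro!: sum.cong)
  also have "\<dots> = (if x = 0 then 0 else weight_sum L (x - 1)) / (2 * real x + 1)"
    by (simp add: weight_sum_def sum_divide_distrib)
  also have "(\<Sum>w\<in>?down. 1 / real (hook_weight 0 w)) = weight_sum L (Suc x) / (2 * real x + 1)"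
    unfolding weight_sum_def sum_divide_distrib
    by (subst sum.reindex) (auto simp: inj_on_def dyck_prefixes_def walk_end_append weight
                                 intro!: sum.cong)
  finally show ?thesis
    by (simp add: add_divide_distrib)
qed

corollary weight_sum_Suc_0: "weight_sum (Suc L) 0 = weight_sum L 1"
  using weight_sum_Suc[of L 0] by simp

corollary weight_sum_Suc_Suc:
  "weight_sum (Suc L) (Suc x) = (weight_sum L x + weight_sum L (Suc (Suc x))) / (2 * real x + 3)"
  using weight_sum_Suc[of L "Suc x"] by (simp add: algebra_simps)

lemma ratio_bound_step:
  fixes A B C r :: real
  assumes "r \<ge> 0" "C \<ge> 0" "(2*r+3) * B \<le> A" "(2*r+7) * C \<le> B"
  shows "(2*r+5) * ((B+C) / (2*r+7)) \<le> (A+B) / (2*r+3)"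
proof -
  have pos: "2*r+7 > 0" "2*r+3 > 0"
    using assms(1) by auto
  have "0 \<le> (2*r+7) * C"
    using assms(1,2) by simp
  then have "B \<ge> 0" "C \<le> B / (2*r+7)"
    using assms(4) pos by (simp_all add: field_simps)
  then have "(2*r+5) * ((B+C) / (2*r+7)) \<le> (2*r+5) * ((B + B/(2*r+7)) / (2*r+7))"
    using assms pos by (intro mult_left_mono divide_right_mono) auto
  also have "\<dots> = B * ((2*r+5) * (2*r+8) / (2*r+7)^2)"
    using pos by (simp add: field_simps power2_eq_square)
  also have "\<dots> \<le> B * ((2*r+4) / (2*r+3))"
  proof (intro mult_left_mono)
    have "(2*r+5) * (2*r+8) * (2*r+3) + (8*r^2 + 52*r + 76) = (2*r+4) * (2*r+7)^2"
      by (simp add: algebra_simps power2_eq_square)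
    moreover have "8*r^2 + 52*r + 76 \<ge> 0"
      using assms(1) by simp
    ultimately show "(2*r+5) * (2*r+8) / (2*r+7)^2 \<le> (2*r+4) / (2*r+3)"
      using pos by (simp add: divide_simps)
  qed (use \<open>B \<ge> 0\<close> in simp)
  also have "\<dots> \<le> (A+B) / (2*r+3)"
    using assms(3) pos by (simp add: divide_right_mono algebra_simps)
  finally show ?thesis .
qed

lemma weight_sum_ratio: "1 \<le> x \<Longrightarrow> (2 * real x + 1) * weight_sum L (x + 1) \<le> weight_sum L (x - 1)"
proof (induction L arbitrary: x)
  case 0
  then show ?case by (simp add: weight_sum_0)
next
  case (Suc L)
  show ?case
  proof (cases "x = 1")
    case True
    have "5 * weight_sum L 3 \<le> weight_sum L 1"
      using Suc.IH[of 2] by simp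
    moreover have "5 * weight_sum (Suc L) 2 = weight_sum L 1 + weight_sum L 3"
      using weight_sum_Suc_Suc[of L 1] by (simp add: numeral_eq_Suc)
    ultimately have "3 * weight_sum (Suc L) 2 \<le> weight_sum (Suc L) 0"
      using weight_sum_Suc_0[of L] weight_sum_nonneg[of L 3] by linarith
    moreover have x: "x + 1 = 2" "x - 1 = 0" "real x = 1"
      using True by auto
    ultimately show ?thesis
      unfolding x by simp
  next
    case False
    then obtain y where y: "x = Suc (Suc y)"
      using Suc.prems by (metis One_nat_def Suc_le_D le_SucE not0_implies_Suc le_zero_eq)
    have "(2 * real y + 3) * weight_sum L (y + 2) \<le> weight_sum L y"
      using Suc.IH[of "Suc y"] by (simp add: algebra_simps)
    moreover have "(2 * real y + 7) * weight_sum L (y + 4) \<le> weight_sum L (y + 2)"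
      using Suc.IH[of "Suc (Suc (Suc y))"] by (simp add: algebra_simps numeral_eq_Suc)
    ultimately have "(2 * real y + 5) * ((weight_sum L (y + 2) + weight_sum L (y + 4)) / (2 * real y + 7))
                     \<le> (weight_sum L y + weight_sum L (y + 2)) / (2 * real y + 3)"
      by (intro ratio_bound_step) (auto simp: weight_sum_nonneg)
    moreover have "weight_sum (Suc L) (x - 1) = (weight_sum L y + weight_sum L (y + 2)) / (2 * real y + 3)"
      using weight_sum_Suc_Suc[of L y] y by simp
    moreover have "weight_sum (Suc L) (x + 1) = (weight_sum L (y + 2) + weight_sum L (y + 4)) / (2 * real y + 7)"
      using weight_sum_Suc_Suc[of L "Suc (Suc y)"] y by (simp add: numeral_eq_Suc algebra_simps)
    ultimately show ?thesis
      using y by (simp add: algebra_simps)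
  qed
qed

lemma weight_sum_pos: "x \<le> L \<Longrightarrow> even (L - x) \<Longrightarrow> weight_sum L x > 0"
proof (induction L arbitrary: x)
  case 0
  then show ?case by (simp add: weight_sum_0)
next
  case (Suc L)
  show ?case
  proof (cases x)
    case 0
    then show ?thesis
      using Suc by (cases L) (auto simp: weight_sum_Suc_0)
  next
    case (Suc y)
    then have "weight_sum L y > 0"
      using Suc.IH[of y] Suc.prems by auto
    then show ?thesis
      using Suc weight_sum_Suc_Suc weight_sum_nonneg[of L "Suc (Suc y)"]
      by (simp add: add_pos_nonneg)
  qed
qed

lemma weight_sum_Suc_gt:
  assumes "1 \<le> x" "x + 1 \<le> L" "even (L - x - 1)"
  shows "weight_sum L (x + 1) < weight_sum (Suc L) x"
proof -
  obtain y where y: "x = Suc y"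
    using assms by (cases x) auto
  have "0 < weight_sum L (x + 1)"
    using assms by (intro weight_sum_pos) auto
  moreover have "(2 * real x + 1) * weight_sum L (x + 1) \<le> weight_sum L y"
    using weight_sum_ratio[of x L] assms y by simp
  moreover have "(2 * real x + 1) * weight_sum (Suc L) x = weight_sum L y + weight_sum L (x + 1)"
    using weight_sum_Suc_Suc[of L y] y by (simp add: field_simps)
  ultimately have "(2 * real x + 1) * weight_sum L (x + 1) < (2 * real x + 1) * weight_sum (Suc L) x"
    by linarith
  then show ?thesis
    by (simp add: mult_less_cancel_left_pos add_pos_nonneg)
qed

section \<open>Diagrams, rims and ribbons of partitions\<close>

lemma mem_diagram: "(i, j) \<in> diagram lam \<longleftrightarrow> 1 \<le> i \<and> 1 \<le> j \<and> j \<le> part lam i"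
  unfolding diagram_def part_def by auto

lemma part_beyond_length: "length lam < i \<Longrightarrow> part lam i = 0"
  unfolding part_def by auto

lemma part_antimono:
  assumes "is_partition lam" "1 \<le> i" "i \<le> i'"
  shows "part lam i' \<le> part lam i"
proof (cases "i' \<le> length lam \<and> i < i'")
  case True
  have "sorted_wrt (\<ge>) lam"
    using assms(1) unfolding is_partition_def by simp
  moreover have "i - 1 < i' - 1" "i' - 1 < length lam"
    using True assms(2) by auto
  ultimately have "lam ! (i' - 1) \<le> lam ! (i - 1)"
    by (rule sorted_wrt_nth_less)
  then show ?thesis
    using True assms unfolding part_def by auto
qed (use assms(3) part_beyond_length[of lam i'] in \<open>auto simp: not_le\<close>)

lemma part_pos:
  assumes "is_partition lam" "1 \<le> i" "i \<le> length lam"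
  shows "1 \<le> part lam i"
proof -
  have "lam ! (i - 1) \<in> set lam"
    using assms by auto
  then have "lam ! (i - 1) \<noteq> 0"
    using assms(1) unfolding is_partition_def by metis
  then show ?thesis
    using assms(2,3) unfolding part_def by simp
qed

lemma mem_diagram_first_column:
  assumes "is_partition lam"
  shows "(i, 1) \<in> diagram lam \<longleftrightarrow> 1 \<le> i \<and> i \<le> length lam"
  using part_pos[OF assms, of i] part_beyond_length[of lam i]
  by (cases "i \<le> length lam") (auto simp: mem_diagram)

lemma partition_eq_if_diagram_eq:
  assumes "is_partition a" "is_partition b" "diagram a = diagram b"
  shows "a = b"
proof -
  have "1 \<le> i \<and> i \<le> length a \<longleftrightarrow> 1 \<le> i \<and> i \<le> length b" for i
    using mem_diagram_first_column[OF assms(1), of i] mem_diagram_first_column[OF assms(2), of i]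
      assms(3) by simp
  from this[of "length a"] this[of "length b"] have len: "length a = length b"
    by auto
  have part: "part a i = part b i" if "1 \<le> i" for i
  proof -
    have iff: "j \<le> part a i \<longleftrightarrow> j \<le> part b i" if "1 \<le> j" for j
      using assms(3) \<open>1 \<le> i\<close> that mem_diagram[of i j a] mem_diagram[of i j b] by simp
    show ?thesis
    proof (rule antisym)
      show "part a i \<le> part b i"
        using iff[of "part a i"] by (cases "part a i") auto
      show "part b i \<le> part a i"
        using iff[of "part b i"] by (cases "part b i") auto
    qed
  qed
  show ?thesis
  proof (rule nth_equalityI)
    fix m assume "m < length a"
    then show "a ! m = b ! m"
      using part[of "Suc m"] len unfolding part_def by simp
  qed (rule len)
qed

lemma rim_subset_diagram: "rim lam \<subseteq> diagram lam"
  unfolding rim_def by auto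

lemma mem_rim_iff:
  assumes "is_partition lam"
  shows "(i, j) \<in> rim lam \<longleftrightarrow> (i, j) \<in> diagram lam \<and> (i + 1, j + 1) \<notin> diagram lam"
proof -
  let ?N = "{(i, j + 1), (i + 1, j), (i + 1, j + 1)}"
  have "card (?N \<inter> diagram lam) < 3 \<longleftrightarrow> (i + 1, j + 1) \<notin> diagram lam"
    if "(i, j) \<in> diagram lam"
  proof
    assume small: "card (?N \<inter> diagram lam) < 3"
    show "(i + 1, j + 1) \<notin> diagram lam"
    proof
      assume corner: "(i + 1, j + 1) \<in> diagram lam"
      have "part lam (i + 1) \<le> part lam i"
        using part_antimono[OF assms, of i "i + 1"] that by (simp add: mem_diagram)
      then have "?N \<inter> diagram lam = ?N"
        using corner that by (auto simp: mem_diagram)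
      then show False
        using small by simp
    qed
  next
    assume "(i + 1, j + 1) \<notin> diagram lam"
    then have "card (?N \<inter> diagram lam) \<le> card {(i, j + 1), (i + 1, j)}"
      by (intro card_mono) auto
    also have "\<dots> \<le> 2"
      by (simp add: card_insert_if)
    finally show "card (?N \<inter> diagram lam) < 3"
      by simp
  qed
  then show ?thesis
    unfolding rim_def by auto
qed

lemma mem_diagram_iff_rim:
  assumes "is_partition lam"
  shows "(i, j) \<in> diagram lam \<longleftrightarrow> 1 \<le> j \<and> (\<exists>j' \<ge> j. (i, j') \<in> rim lam)"
proof
  assume ij: "(i, j) \<in> diagram lam"
  have "part lam (i + 1) \<le> part lam i"
    using part_antimono[OF assms, of i "i + 1"] ij by (simp add: mem_diagram)
  then have "(i, part lam i) \<in> rim lam"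
    using ij by (auto simp: mem_rim_iff[OF assms] mem_diagram)
  then show "1 \<le> j \<and> (\<exists>j' \<ge> j. (i, j') \<in> rim lam)"
    using ij by (auto simp: mem_diagram)
next
  assume "1 \<le> j \<and> (\<exists>j' \<ge> j. (i, j') \<in> rim lam)"
  then show "(i, j) \<in> diagram lam"
    using rim_subset_diagram[of lam] by (auto simp: mem_diagram)
qed

lemma partition_eq_if_rim_eq:
  assumes "is_partition a" "is_partition b" "rim a = rim b"
  shows "a = b"
proof (rule partition_eq_if_diagram_eq[OF assms(1,2)])
  show "diagram a = diagram b"
    using mem_diagram_iff_rim[OF assms(1)] mem_diagram_iff_rim[OF assms(2)] assms(3) by auto
qed

lemma ribbon_steps_mono:
  fixes c :: "nat \<Rightarrow> cell"
  assumes steps: "\<forall>t\<in>{1..<n}. c (Suc t) = (fst (c t), snd (c t) + 1) \<or>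
                                (fst (c t) \<ge> 1 \<and> c (Suc t) = (fst (c t) - 1, snd (c t)))"
    and "1 \<le> s" "s \<le> t" "t \<le> n"
  shows "fst (c t) \<le> fst (c s) \<and> snd (c s) \<le> snd (c t)"
  using assms(3,4)
proof (induction t rule: dec_induct)
  case (step m)
  then have "m \<in> {1..<n}"
    using assms(2) by simp
  then have "c (Suc m) = (fst (c m), snd (c m) + 1) \<or> c (Suc m) = (fst (c m) - 1, snd (c m))"
    using steps by blast
  then have "fst (c (Suc m)) \<le> fst (c m) \<and> snd (c m) \<le> snd (c (Suc m))"
    by auto
  moreover have "fst (c m) \<le> fst (c s) \<and> snd (c s) \<le> snd (c m)"
    using step by simp
  ultimately show ?case
    by linarith
qed simp

lemma ribbon_first_cell:
  fixes c :: "nat \<Rightarrow> cell"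
  assumes "is_partition lam" "rim lam = c ` {1..n}" "1 \<le> n"
    and steps: "\<forall>t\<in>{1..<n}. c (Suc t) = (fst (c t), snd (c t) + 1) \<or>
                                (fst (c t) \<ge> 1 \<and> c (Suc t) = (fst (c t) - 1, snd (c t)))"
  shows "c 1 = (length lam, 1)"
proof -
  obtain i j where c1: "c 1 = (i, j)"
    by (cases "c 1")
  have "(i, j) \<in> diagram lam"
    using assms(2,3) rim_subset_diagram c1 by force
  then have ij: "1 \<le> i" "i \<le> length lam" "1 \<le> j"
    by (auto simp: diagram_def)
  then have "(length lam, 1) \<in> rim lam"
    using part_pos[OF assms(1), of "length lam"] part_beyond_length[of lam "length lam + 1"]
    by (auto simp: mem_rim_iff[OF assms(1)] mem_diagram)
  then obtain t where "1 \<le> t" "t \<le> n" "c t = (length lam, 1)"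
    using assms(2) by auto
  then have "length lam \<le> i" "j \<le> 1"
    using ribbon_steps_mono[OF steps, of 1 t] c1 by auto
  then show ?thesis
    using ij c1 by simp
qed

lemma ribbon_last_cell:
  fixes c :: "nat \<Rightarrow> cell"
  assumes "is_partition lam" "rim lam = c ` {1..n}" "1 \<le> n"
    and steps: "\<forall>t\<in>{1..<n}. c (Suc t) = (fst (c t), snd (c t) + 1) \<or>
                                (fst (c t) \<ge> 1 \<and> c (Suc t) = (fst (c t) - 1, snd (c t)))"
  shows "c n = (1, part lam 1)"
proof -
  obtain i j where cn: "c n = (i, j)"
    by (cases "c n")
  have "(i, j) \<in> diagram lam"
    using assms(2,3) rim_subset_diagram cn by force
  then have ij: "1 \<le> i" "i \<le> length lam" "j \<le> part lam i"
    by (auto simp: diagram_def mem_diagram)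
  then have "(1, part lam 1) \<in> rim lam"
    using part_pos[OF assms(1), of 1] part_antimono[OF assms(1), of 1 "Suc (Suc 0)"]
    by (auto simp: mem_rim_iff[OF assms(1)] mem_diagram)
  then obtain t where "1 \<le> t" "t \<le> n" "c t = (1, part lam 1)"
    using assms(2) by auto
  then have "i \<le> 1" "part lam 1 \<le> j"
    using ribbon_steps_mono[OF steps, of t n] cn by auto
  then show ?thesis
    using ij cn by simp
qed

section \<open>The shape of the odd descent set\<close>

definition lambda_odd :: "nat \<Rightarrow> nat list" where
  "lambda_odd k = (k + 1) # rev [1..<k + 2]"

definition mu_odd :: "nat \<Rightarrow> nat list" where
  "mu_odd k = rev [1..<k + 1]"

lemma is_partition_lambda_odd: "is_partition (lambda_odd k)"
  by (auto simp: is_partition_def lambda_odd_def sorted_wrt_rev simp del: upt_Suc)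

lemma is_partition_mu_odd: "is_partition (mu_odd k)"
  by (auto simp: is_partition_def mu_odd_def sorted_wrt_rev simp del: upt_Suc)

lemma part_lambda_odd:
  "part (lambda_odd k) i = (if i = 1 then k + 1 else if 2 \<le> i \<and> i \<le> k + 2 then k + 3 - i else 0)"
  by (auto simp: part_def lambda_odd_def rev_nth nth_Cons')

lemma diagram_lambda_odd:
  "diagram (lambda_odd k) = {(i, j). 1 \<le> i \<and> 1 \<le> j \<and> (i + j \<le> k + 2 \<or> (2 \<le> i \<and> i + j = k + 3))}"
  by (auto simp: mem_diagram part_lambda_odd split: if_splits)

lemma diagram_mu_odd: "diagram (mu_odd k) = {(i, j). 1 \<le> i \<and> 1 \<le> j \<and> i + j \<le> k + 1}"
  by (auto simp: mem_diagram part_def mu_odd_def rev_nth simp del: upt_Suc split: if_splits)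

lemma rim_lambda_odd:
  "rim (lambda_odd k) = {(i, j). 1 \<le> i \<and> 1 \<le> j \<and> (i + j = k + 2 \<or> (2 \<le> i \<and> i + j = k + 3))}"
  using mem_rim_iff[OF is_partition_lambda_odd] by (auto simp: diagram_lambda_odd)

abbreviation odd_descents :: "nat \<Rightarrow> nat set" where
  "odd_descents k \<equiv> (\<lambda>i. 2 * i + 1) ` {0..k}"

lemma mem_odd_descents: "t \<in> odd_descents k \<longleftrightarrow> odd t \<and> t \<le> 2 * k + 1"
proof
  assume "odd t \<and> t \<le> 2 * k + 1"
  then show "t \<in> odd_descents k"
    by (auto elim!: oddE)
qed auto

definition odd_ribbon_cell :: "nat \<Rightarrow> nat \<Rightarrow> cell" where
  "odd_ribbon_cell k t = (k + 2 - t div 2, t - t div 2)"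

lemma rim_lambda_odd_eq_image: "rim (lambda_odd k) = odd_ribbon_cell k ` {1..2 * k + 2}"
proof (intro set_eqI iffI)
  fix c assume "c \<in> rim (lambda_odd k)"
  then obtain i j where c: "c = (i, j)" "1 \<le> i" "1 \<le> j" "i + j = k + 2 \<or> (2 \<le> i \<and> i + j = k + 3)"
    unfolding rim_lambda_odd by auto
  then have "odd_ribbon_cell k (if i + j = k + 2 then 2 * j else 2 * j - 1) = (i, j)"
    unfolding odd_ribbon_cell_def by auto
  moreover have "(if i + j = k + 2 then 2 * j else 2 * j - 1) \<in> {1..2 * k + 2}"
    using c by auto
  ultimately show "c \<in> odd_ribbon_cell k ` {1..2 * k + 2}"
    using c(1) by (metis image_eqI)
next
  fix c assume "c \<in> odd_ribbon_cell k ` {1..2 * k + 2}"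
  then obtain t where "c = odd_ribbon_cell k t" "1 \<le> t" "t \<le> 2 * k + 2"
    by auto
  then show "c \<in> rim (lambda_odd k)"
    unfolding rim_lambda_odd odd_ribbon_cell_def by auto
qed

lemma inj_on_odd_ribbon_cell: "inj_on (odd_ribbon_cell k) {1..2 * k + 2}"
proof (rule inj_onI)
  fix t t' assume t: "t \<in> {1..2 * k + 2}" "t' \<in> {1..2 * k + 2}"
    and eq: "odd_ribbon_cell k t = odd_ribbon_cell k t'"
  have "t div 2 \<le> k + 1" "t' div 2 \<le> k + 1"
    using t by auto
  moreover have "k + 2 - t div 2 = k + 2 - t' div 2" "t - t div 2 = t' - t' div 2"
    using eq unfolding odd_ribbon_cell_def by auto
  ultimately have "t div 2 = t' div 2"
    by arith
  moreover have "t div 2 \<le> t" "t' div 2 \<le> t'"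
    by auto
  ultimately show "t = t'"
    using \<open>t - t div 2 = t' - t' div 2\<close> by arith
qed

lemma ribbon_for_lambda_odd: "ribbon_for (odd_descents k) (rim (lambda_odd k))"
proof -
  have card: "card (rim (lambda_odd k)) = 2 * k + 2"
    unfolding rim_lambda_odd_eq_image by (subst card_image[OF inj_on_odd_ribbon_cell]) simp
  have step: "odd_ribbon_cell k (Suc t) =
                (if odd t then (fst (odd_ribbon_cell k t) - 1, snd (odd_ribbon_cell k t))
                 else (fst (odd_ribbon_cell k t), snd (odd_ribbon_cell k t) + 1))"
    if "t < 2 * k + 2" for t
    using that unfolding odd_ribbon_cell_def by (auto elim!: oddE evenE)
  show ?thesis
    unfolding ribbon_for_def card
  proof (intro exI[of _ "odd_ribbon_cell k"] conjI ballI)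
    fix t assume "t \<in> {1..<2 * k + 2}"
    then show "odd_ribbon_cell k (Suc t) = (fst (odd_ribbon_cell k t), snd (odd_ribbon_cell k t) + 1) \<or>
          (fst (odd_ribbon_cell k t) \<ge> 1 \<and>
           odd_ribbon_cell k (Suc t) = (fst (odd_ribbon_cell k t) - 1, snd (odd_ribbon_cell k t)))"
      using step[of t] by (auto simp: odd_ribbon_cell_def)
  next
    have "odd_ribbon_cell k (Suc t) \<noteq> (fst (odd_ribbon_cell k t) - 1, snd (odd_ribbon_cell k t))"
      if "even t" "t < 2 * k + 2" for t
      using that step[of t] by (auto simp: odd_ribbon_cell_def)
    then show "odd_descents k = {t \<in> {1..<2 * k + 2}. odd_ribbon_cell k (Suc t) =
                 (fst (odd_ribbon_cell k t) - 1, snd (odd_ribbon_cell k t))}"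
      using step unfolding mem_odd_descents set_eq_iff by (auto elim!: oddE)
  qed (rule rim_lambda_odd_eq_image)
qed

(* min (t div 2) (k + 1) is the number of descents below t. *)
lemma odd_ribbon_cells:
  fixes c :: "nat \<Rightarrow> cell"
  assumes steps: "\<forall>t\<in>{1..<n}. c (Suc t) = (fst (c t), snd (c t) + 1) \<or>
                                (fst (c t) \<ge> 1 \<and> c (Suc t) = (fst (c t) - 1, snd (c t)))"
    and descents: "odd_descents k = {t \<in> {1..<n}. c (Suc t) = (fst (c t) - 1, snd (c t))}"
    and "c 1 = (a, 1)" "1 \<le> t" "t \<le> n"
  shows "c t = (a - min (t div 2) (k + 1), t - min (t div 2) (k + 1))"
  using assms(4,5)
proof (induction t rule: dec_induct)
  case base
  then show ?case
    using assms(3) by simp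
next
  case (step t)
  then have t: "t \<in> {1..<n}"
    by simp
  have IH: "c t = (a - min (t div 2) (k + 1), t - min (t div 2) (k + 1))"
    using step by simp
  have "min (t div 2) (k + 1) < t"
    using step(1) by presburger
  show ?case
  proof (cases "odd t \<and> t \<le> 2 * k + 1")
    case True
    then have "c (Suc t) = (fst (c t) - 1, snd (c t))"
      using t descents mem_odd_descents by blast
    moreover have "min (Suc t div 2) (k + 1) = min (t div 2) (k + 1) + 1"
      using True by presburger
    ultimately show ?thesis
      using IH \<open>min (t div 2) (k + 1) < t\<close> by auto
  next
    case False
    then have "c (Suc t) \<noteq> (fst (c t) - 1, snd (c t))"
      using t descents mem_odd_descents by blast
    then have "c (Suc t) = (fst (c t), snd (c t) + 1)"
      using t steps by blast
    moreover have "min (Suc t div 2) (k + 1) = min (t div 2) (k + 1)"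
      using False by presburger
    ultimately show ?thesis
      using IH \<open>min (t div 2) (k + 1) < t\<close> by (auto simp: Suc_diff_le)
  qed
qed

lemma lambda_odd_unique:
  assumes lam: "is_partition lam" and p12: "part lam 1 = part lam 2"
    and ribbon: "ribbon_for (odd_descents k) (rim lam)"
  shows "lam = lambda_odd k"
proof -
  obtain c n where R: "rim lam = c ` {1..n}"
    and steps: "\<forall>t\<in>{1..<n}. c (Suc t) = (fst (c t), snd (c t) + 1) \<or>
                                (fst (c t) \<ge> 1 \<and> c (Suc t) = (fst (c t) - 1, snd (c t)))"
    and descents: "odd_descents k = {t \<in> {1..<n}. c (Suc t) = (fst (c t) - 1, snd (c t))}"
    using ribbon unfolding ribbon_for_def by blast
  have n: "2 * k + 2 \<le> n"
    using descents mem_odd_descents[of "2 * k + 1" k] by auto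
  have first: "c 1 = (length lam, 1)"
    using ribbon_first_cell[OF lam R _ steps] n by simp
  note cell = odd_ribbon_cells[OF steps descents first]
  have "min (n div 2) (k + 1) = k + 1"
    using n by auto
  then have len: "length lam = k + 2" and part1: "part lam 1 = n - (k + 1)"
    using cell[of n] ribbon_last_cell[OF lam R _ steps] n by auto
  have "n = 2 * k + 2"
  proof (rule ccontr)
    assume "n \<noteq> 2 * k + 2"
    then have "min ((n - 1) div 2) (k + 1) = k + 1"
      using n by auto
    then have "(1, part lam 1 - 1) \<in> rim lam"
      using R cell[of "n - 1"] n len part1 by (auto intro!: image_eqI[of _ c "n - 1"])
    moreover have "part lam 1 - 1 + 1 = part lam 1"
      using part1 n by simp
    ultimately have "(2, part lam 1) \<notin> diagram lam"
      using mem_rim_iff[OF lam, of 1 "part lam 1 - 1"] by (simp add: numeral_2_eq_2)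
    then show False
      using p12 part_pos[OF lam, of 2] len by (simp add: mem_diagram)
  qed
  then have "rim lam = rim (lambda_odd k)"
    unfolding R rim_lambda_odd_eq_image using cell len
    by (intro image_cong) (auto simp: odd_ribbon_cell_def min_def)
  then show ?thesis
    using partition_eq_if_rim_eq lam is_partition_lambda_odd by blast
qed

lemma lambdaI_odd_descents: "lambdaI (odd_descents k) = lambda_odd k"
  unfolding lambdaI_def
proof (rule the_equality)
  show "is_partition (lambda_odd k) \<and> part (lambda_odd k) 1 = part (lambda_odd k) 2 \<and>
        ribbon_for (odd_descents k) (rim (lambda_odd k))"
    using is_partition_lambda_odd ribbon_for_lambda_odd by (simp add: part_lambda_odd)
qed (use lambda_odd_unique in blast)

lemma muI_odd_descents: "muI (odd_descents k) = mu_odd k"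
proof -
  have "diagram (lambda_odd k) - rim (lambda_odd k) = diagram (mu_odd k)"
    unfolding diagram_lambda_odd rim_lambda_odd diagram_mu_odd by auto
  then show ?thesis
    unfolding muI_def lambdaI_odd_descents
    using is_partition_mu_odd partition_eq_if_diagram_eq[OF _ is_partition_mu_odd]
    by (intro the_equality) auto
qed

lemma sI_odd_descents: "sI (odd_descents k) = k"
  unfolding sI_def lambdaI_odd_descents by (simp add: part_lambda_odd)

section \<open>Lattice paths\<close>

fun path_step :: "bool \<Rightarrow> cell \<Rightarrow> cell" where
  "path_step b (i, j) = (if b then (i - 1, j) else (i, j + 1))"

fun path_cells :: "cell \<Rightarrow> bool list \<Rightarrow> cell set" where
  "path_cells p [] = {p}"
| "path_cells p (b # s) = insert p (path_cells (path_step b p) s)"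

fun path_end :: "cell \<Rightarrow> bool list \<Rightarrow> cell" where
  "path_end p [] = p"
| "path_end p (b # s) = path_end (path_step b p) s"

lemma finite_path_cells: "finite (path_cells p s)"
  by (induction s arbitrary: p) auto

lemma start_mem_path_cells: "p \<in> path_cells p s"
  by (cases s) auto

lemma path_end_mem_path_cells: "path_end p s \<in> path_cells p s"
  by (induction s arbitrary: p) auto

lemma path_cells_append: "path_cells p (a @ b) = path_cells p a \<union> path_cells (path_end p a) b"
  by (induction a arbitrary: p) (auto simp: start_mem_path_cells)

lemma path_cells_bound: "c \<in> path_cells p s \<Longrightarrow> fst c \<le> fst p \<and> snd p \<le> snd c"
proof (induction s arbitrary: p)
  case (Cons b s)
  then show ?case
    by (cases p; cases b) fastforce+
qed simp

lemma path_cells_bound_end: "c \<in> path_cells p s \<Longrightarrow> fst (path_end p s) \<le> fst c \<and> snd c \<le> snd (path_end p s)"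
proof (induction s arbitrary: p)
  case (Cons b s)
  have "fst (path_end (path_step b p) s) \<le> fst (path_step b p) \<and>
        snd (path_step b p) \<le> snd (path_end (path_step b p) s)"
    using path_cells_bound[OF path_end_mem_path_cells] .
  then show ?case
    using Cons by (cases p; cases b) auto
qed simp

lemma path_end_eq: "ups s \<le> fst p \<Longrightarrow> path_end p s = (fst p - ups s, snd p + rights s)"
proof (induction s arbitrary: p)
  case (Cons b s)
  then show ?case
    by (cases p; cases b) auto
qed simp

lemma path_cells_split: "c \<in> path_cells p s \<Longrightarrow> \<exists>a b. s = a @ b \<and> path_end p a = c"
proof (induction s arbitrary: p)
  case Nil
  then show ?case by simp
next
  case (Cons x s)
  show ?case
  proof (cases "c = p")
    case True
    then show ?thesis
      by (metis append_Nil path_end.simps(1))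
  next
    case False
    then obtain a b where "s = a @ b" "path_end (path_step x p) a = c"
      using Cons.IH[of "path_step x p"] Cons.prems by auto
    then show ?thesis
      by (intro exI[of _ "x # a"] exI[of _ b]) simp
  qed
qed

lemma path_cells_replicate_False: "path_cells (i, j) (replicate n False) = {i} \<times> {j..j + n}"
proof (induction n arbitrary: j)
  case (Suc n)
  then show ?case
    by (auto simp: le_Suc_eq)
qed simp

lemma start_notin_path_cells_step:
  "fst p \<noteq> 0 \<Longrightarrow> p \<notin> path_cells (path_step b p) s"
  using path_cells_bound[of p "path_step b p" s] by (cases p; cases b) auto

lemma path_cells_inj:
  "path_cells p s = path_cells p s' \<Longrightarrow> length s = length s' \<Longrightarrow> ups s < fst p \<Longrightarrow> ups s' < fst p \<Longrightarrow> s = s'"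
proof (induction s arbitrary: p s')
  case (Cons b s)
  obtain b' t where s': "s' = b' # t"
    using Cons.prems(2) by (cases s') auto
  obtain i j where p: "p = (i, j)"
    by (cases p)
  have i: "1 \<le> i"
    using Cons.prems(3) p by simp
  have "b = b'"
  proof (rule ccontr)
    assume "b \<noteq> b'"
    then obtain u v where eq: "path_cells p (True # u) = path_cells p (False # v)"
      using Cons.prems(1) s' by (cases b) auto
    have "(i - 1, j) \<in> path_cells p (True # u)"
      using p by (simp add: start_mem_path_cells)
    then have "(i - 1, j) \<in> path_cells (i, j + 1) v"
      unfolding eq using i p by auto
    then show False
      using path_cells_bound[of "(i - 1, j)" "(i, j + 1)" v] by simp
  qed
  have "insert p (path_cells (path_step b p) s) = insert p (path_cells (path_step b p) t)"
    using Cons.prems(1) s' \<open>b = b'\<close> by simp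
  moreover have "p \<notin> path_cells (path_step b p) s" "p \<notin> path_cells (path_step b p) t"
    using start_notin_path_cells_step[of p b s] start_notin_path_cells_step[of p b t] i p by auto
  ultimately have "path_cells (path_step b p) s = path_cells (path_step b p) t"
    by (simp add: insert_ident)
  moreover have "ups s < fst (path_step b p) \<and> ups t < fst (path_step b p)"
    using Cons.prems(3,4) s' p \<open>b = b'\<close> by (cases b) auto
  ultimately have "s = t"
    using Cons.IH Cons.prems(2) s' by auto
  then show ?case
    using s' \<open>b = b'\<close> by simp
qed simp

(* An excited move at (i,j) flips the right-up corner of the path at (i+1,j) into up-right. *)
lemma path_cells_flip:
  assumes "path_end p a = (i + 1, j)"
  shows "path_cells p (a @ True # False # b) = insert (i, j) (path_cells p (a @ False # True # b) - {(i + 1, j + 1)})"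
    and "(i, j) \<notin> path_cells p (a @ False # True # b)"
    and "{(i, j + 1), (i + 1, j), (i + 1, j + 1)} \<subseteq> path_cells p (a @ False # True # b)"
proof -
  have before: "c \<in> path_cells p a \<Longrightarrow> i + 1 \<le> fst c \<and> snd c \<le> j" for c
    using path_cells_bound_end[of c p a] assms by simp
  have after: "c \<in> path_cells (i, j + 1) b \<Longrightarrow> fst c \<le> i \<and> j + 1 \<le> snd c" for c
    using path_cells_bound[of c _ b] by fastforce
  have end_a: "(i + 1, j) \<in> path_cells p a"
    using path_end_mem_path_cells[of p a] assms by simp
  have up_right: "path_cells p (a @ True # False # b) = path_cells p a \<union> {(i, j)} \<union> path_cells (i, j + 1) b"
    using assms end_a by (auto simp: path_cells_append)
  have right_up: "path_cells p (a @ False # True # b) = path_cells p a \<union> {(i + 1, j + 1)} \<union> path_cells (i, j + 1) b"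
    using assms end_a by (auto simp: path_cells_append start_mem_path_cells)
  show "path_cells p (a @ True # False # b) = insert (i, j) (path_cells p (a @ False # True # b) - {(i + 1, j + 1)})"
    unfolding up_right right_up using before after end_a by fastforce
  show "(i, j) \<notin> path_cells p (a @ False # True # b)"
    unfolding right_up using before after by fastforce
  show "{(i, j + 1), (i + 1, j), (i + 1, j + 1)} \<subseteq> path_cells p (a @ False # True # b)"
    unfolding right_up using start_mem_path_cells[of "(i, j + 1)" b] end_a by auto
qed

lemma path_cells_corner:
  assumes "(i + 1, j) \<in> path_cells p s" "(i, j + 1) \<in> path_cells p s" "(i, j) \<notin> path_cells p s"
  shows "\<exists>a b. s = a @ False # True # b \<and> path_end p a = (i + 1, j)"
proof -
  obtain a rest where s: "s = a @ rest" and a: "path_end p a = (i + 1, j)"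
    using path_cells_split[OF assms(1)] by blast
  have "(i, j + 1) \<notin> path_cells p a"
    using path_cells_bound_end[of "(i, j + 1)" p a] a by auto
  then have on_rest: "(i, j + 1) \<in> path_cells (i + 1, j) rest"
    using assms(2) a unfolding s path_cells_append by auto
  have off_rest: "(i, j) \<notin> path_cells (i + 1, j) rest"
    using assms(3) a unfolding s path_cells_append by auto
  obtain b where "rest = False # True # b"
  proof (cases rest)
    case (Cons x r)
    show ?thesis
    proof (cases x)
      case True
      then show ?thesis
        using off_rest Cons start_mem_path_cells[of "(i, j)" r] by simp
    next
      case False
      then have r: "(i, j + 1) \<in> path_cells (i + 1, j + 1) r"
        using on_rest Cons by simp
      show ?thesis
      proof (cases r)
        case (Cons y b)
        have "\<not> (i, j + 1) \<in> path_cells (i + 1, j + 2) b"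
          using path_cells_bound[of "(i, j + 1)" "(i + 1, j + 2)" b] by fastforce
        then have y
          using r Cons by (cases y) (auto simp: numeral_eq_Suc)
        then show ?thesis
          using that Cons \<open>rest = x # r\<close> False by simp
      qed (use r in simp)
    qed
  qed (use on_rest in simp)
  then show ?thesis
    using s a by blast
qed

section \<open>Excited diagrams as complements of lattice paths\<close>

(* Paths from (k+2,1) to (1,k+1) inside lambda_odd k: the walk condition says that the height
   k+3-i-j of the visited cells (i,j) never becomes negative. *)
definition admissible :: "nat \<Rightarrow> bool list \<Rightarrow> bool" where
  "admissible k s \<longleftrightarrow> length s = 2 * k + 1 \<and> ups s = k + 1 \<and> nonneg_walk 0 s"

definition path_complement :: "nat \<Rightarrow> bool list \<Rightarrow> cell set" where
  "path_complement k s = diagram (lambda_odd k) - path_cells (k + 2, 1) s"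

definition zigzag :: "nat \<Rightarrow> bool list" where
  "zigzag k = concat (replicate k [True, False]) @ [True]"

lemma admissible_rights: "admissible k s \<Longrightarrow> rights s = k"
  using ups_add_rights[of s] unfolding admissible_def by simp

lemma path_cells_subset_diagram:
  "nonneg_walk h s \<Longrightarrow> a + b + h = k + 3 \<Longrightarrow> 1 \<le> b \<Longrightarrow> 1 + ups s \<le> a \<Longrightarrow> b + rights s \<le> k + 1 \<Longrightarrow>
   path_cells (a, b) s \<subseteq> diagram (lambda_odd k)"
proof (induction s arbitrary: a b h)
  case Nil
  then show ?case by (auto simp: diagram_lambda_odd)
next
  case (Cons x s)
  have "(a, b) \<in> diagram (lambda_odd k)"
    using Cons.prems by (cases x) (auto simp: diagram_lambda_odd)
  moreover have "path_cells (path_step x (a, b)) s \<subseteq> diagram (lambda_odd k)"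
  proof (cases x)
    case True
    then show ?thesis
      using Cons.prems Cons.IH[of "Suc h" "a - 1" b] by simp
  next
    case False
    then show ?thesis
      using Cons.prems Cons.IH[of "h - 1" a "b + 1"] by simp
  qed
  ultimately show ?case
    by simp
qed

lemma admissible_path_cells_subset: "admissible k s \<Longrightarrow> path_cells (k + 2, 1) s \<subseteq> diagram (lambda_odd k)"
  using admissible_rights[of k s] by (intro path_cells_subset_diagram[of 0]) (auto simp: admissible_def)

lemma admissible_zigzag: "admissible k (zigzag k)"
proof -
  have "length (concat (replicate m [True, False])) = 2 * m"
       "ups (concat (replicate m [True, False])) = m"
       "nonneg_walk 0 (concat (replicate m [True, False]) @ [True])" for m
    by (induction m) auto
  then show ?thesis
    unfolding admissible_def zigzag_def by simp
qed

lemma path_cells_zigzag: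
  "m + 1 \<le> a \<Longrightarrow> (x, y) \<in> path_cells (a, b) (concat (replicate m [True, False]) @ [True]) \<longleftrightarrow>
     b \<le> y \<and> y \<le> b + m \<and> (x + y = a + b \<or> x + y + 1 = a + b)"
proof (induction m arbitrary: a b)
  case (Suc m)
  have "path_cells (a, b) (concat (replicate (Suc m) [True, False]) @ [True]) =
        {(a, b), (a - 1, b)} \<union> path_cells (a - 1, b + 1) (concat (replicate m [True, False]) @ [True])"
    by auto
  then show ?case
    using Suc.IH[of "a - 1" "b + 1"] Suc.prems by auto
qed auto

lemma path_complement_zigzag: "path_complement k (zigzag k) = diagram (mu_odd k)"
  using path_cells_zigzag[of k "k + 2" _ _ 1]
  unfolding path_complement_def zigzag_def diagram_lambda_odd diagram_mu_odd by auto

lemma admissible_flip: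
  "admissible k (a @ False # True # b) \<longleftrightarrow> admissible k (a @ True # False # b) \<and> 1 \<le> walk_end 0 a"
  unfolding admissible_def by (auto simp: nonneg_walk_append)

lemma admissible_peak:
  assumes "admissible k s" "s \<noteq> zigzag k"
  shows "\<exists>a b. s = a @ True # False # b \<and> 1 \<le> walk_end 0 a"
  using assms
proof (induction "length s" arbitrary: s k rule: less_induct)
  case less
  have walk: "nonneg_walk 0 s" and len: "length s = 2 * k + 1" and ups: "ups s = k + 1"
    using less.prems(1) unfolding admissible_def by auto
  from sorted_or_first_descent[of s] show ?case
  proof (elim disjE exE)
    fix p r assume s: "s = replicate p False @ replicate r True"
    then have "p = 0"
      using walk by (simp add: nonneg_walk_append nonneg_walk_replicate_False)
    then have "s = zigzag 0"
      using s len ups by (simp add: ups_replicate zigzag_def)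
    moreover have "k = 0"
      using s \<open>p = 0\<close> len ups by (simp add: ups_replicate)
    ultimately show ?thesis
      using less.prems(2) by simp
  next
    fix p q b assume s: "s = replicate p False @ replicate q True @ True # False # b"
    then have "p = 0"
      using walk by (simp add: nonneg_walk_append nonneg_walk_replicate_False)
    show ?thesis
    proof (cases q)
      case (Suc q')
      then show ?thesis
        using s \<open>p = 0\<close> by (intro exI[of _ "replicate q True"] exI[of _ b]) (simp add: walk_end_replicate_True)
    next
      case 0
      then have s: "s = True # False # b"
        using s \<open>p = 0\<close> by simp
      then obtain k' where k: "k = Suc k'"
        using len by (cases k) auto
      have "admissible k' b"
        using less.prems(1) unfolding s k admissible_def by auto
      moreover have "b \<noteq> zigzag k'"
        using less.prems(2) unfolding s k zigzag_def by auto
      ultimately obtain a b' where "b = a @ True # False # b'" "1 \<le> walk_end 0 a"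
        using less.hyps[of b k'] s by auto
      then show ?thesis
        using s by (intro exI[of _ "True # False # a"] exI[of _ b']) simp
    qed
  qed
qed

lemma path_complement_excited:
  "admissible k s \<Longrightarrow> path_complement k s \<in> excited (lambda_odd k) (mu_odd k)"
proof (induction "walk_area 0 s" arbitrary: s rule: less_induct)
  case less
  show ?case
  proof (cases "s = zigzag k")
    case True
    then show ?thesis
      using path_complement_zigzag excited.base by metis
  next
    case False
    then obtain a b where s: "s = a @ True # False # b" and peak: "1 \<le> walk_end 0 a"
      using admissible_peak less.prems by blast
    define s' where "s' = a @ False # True # b"
    have s': "admissible k s'"
      using less.prems admissible_flip peak unfolding s s'_def by blast
    have "walk_area 0 s' < walk_area 0 s"
      unfolding s s'_def using peak by (simp add: walk_area_append)
    then have IH: "path_complement k s' \<in> excited (lambda_odd k) (mu_odd k)"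
      using less.hyps s' by blast
    have "ups a \<le> k"
      using less.prems unfolding s admissible_def by simp
    then obtain i j where a: "path_end (k + 2, 1) a = (i + 1, j)"
      using path_end_eq[of a "(k + 2, 1)"] by (intro that[of "k + 1 - ups a"]) auto
    note flip = path_cells_flip[OF a, of b, folded s s'_def]
    have on_paths: "path_cells (k + 2, 1) s \<subseteq> diagram (lambda_odd k)"
                   "path_cells (k + 2, 1) s' \<subseteq> diagram (lambda_odd k)"
      using admissible_path_cells_subset less.prems s' by auto
    have "(i, j) \<in> path_complement k s'"
      using flip(1,2) on_paths(1) unfolding path_complement_def by auto
    moreover have "(i + 1, j + 1) \<in> diagram (lambda_odd k)"
      using flip(3) on_paths(2) by auto
    moreover have "(i, j + 1) \<notin> path_complement k s'" "(i + 1, j) \<notin> path_complement k s'"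
                  "(i + 1, j + 1) \<notin> path_complement k s'"
      using flip(3) unfolding path_complement_def by auto
    moreover have "path_complement k s = insert (i + 1, j + 1) (path_complement k s' - {(i, j)})"
      using flip(1,2) \<open>(i + 1, j + 1) \<in> diagram (lambda_odd k)\<close> unfolding path_complement_def by auto
    ultimately show ?thesis
      using excited.move[OF IH] by simp
  qed
qed

lemma excited_path_complement:
  "D \<in> excited (lambda_odd k) (mu_odd k) \<Longrightarrow> \<exists>s. admissible k s \<and> D = path_complement k s"
proof (induction rule: excited.induct)
  case base
  then show ?case
    using admissible_zigzag path_complement_zigzag by metis
next
  case (move D i j)
  obtain s where s: "admissible k s" and D: "D = path_complement k s"
    using move.IH by blast
  have "(i + 1, j) \<in> diagram (lambda_odd k)" "(i, j + 1) \<in> diagram (lambda_odd k)"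
    using move.hyps(2,3) D by (auto simp: path_complement_def diagram_lambda_odd)
  then have "(i + 1, j) \<in> path_cells (k + 2, 1) s" "(i, j + 1) \<in> path_cells (k + 2, 1) s"
            "(i, j) \<notin> path_cells (k + 2, 1) s"
    using move.hyps(2,4,5) D by (auto simp: path_complement_def)
  then obtain a b where s_eq: "s = a @ False # True # b" and a: "path_end (k + 2, 1) a = (i + 1, j)"
    using path_cells_corner by blast
  define s' where "s' = a @ True # False # b"
  have "admissible k s'"
    using s admissible_flip unfolding s_eq s'_def by blast
  moreover have "insert (i + 1, j + 1) (D - {(i, j)}) = path_complement k s'"
    using path_cells_flip[OF a, of b] move.hyps(3) unfolding D path_complement_def s'_def s_eq by auto
  ultimately show ?case
    by blast
qed

section \<open>Hook products and the Naruse-Newton coefficients\<close>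

lemma hook_lambda_odd:
  assumes "2 \<le> a" "1 \<le> b" "a + b \<le> k + 3"
  shows "hook (lambda_odd k) (a, b) = 2 * (k + 3 - a - b) + 1"
proof -
  have "{(i, j) \<in> diagram (lambda_odd k). (i = a \<and> j \<ge> b) \<or> (j = b \<and> i \<ge> a)}
        = {a} \<times> {b..k + 3 - a} \<union> {a + 1..k + 3 - b} \<times> {b}"
    using assms unfolding diagram_lambda_odd by auto
  moreover have "card ({a} \<times> {b..k + 3 - a} \<union> {a + 1..k + 3 - b} \<times> {b}) = 2 * (k + 3 - a - b) + 1"
    using assms by (subst card_Un_disjoint) auto
  ultimately show ?thesis
    unfolding hook_def by simp
qed

lemma prod_hook_path_cells:
  "nonneg_walk h w \<Longrightarrow> a + b + h = k + 3 \<Longrightarrow> 1 \<le> b \<Longrightarrow> 2 + ups w \<le> a \<Longrightarrow>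
   (\<Prod>c\<in>path_cells (a, b) w. hook (lambda_odd k) c) = hook_weight h w"
proof (induction w arbitrary: a b h)
  case Nil
  then show ?case
    using hook_lambda_odd[of a b k] by simp
next
  case (Cons x w)
  have "(a, b) \<notin> path_cells (path_step x (a, b)) w"
    using Cons.prems by (intro start_notin_path_cells_step) simp
  moreover have "hook (lambda_odd k) (a, b) = 2 * h + 1"
    using hook_lambda_odd[of a b k] Cons.prems by simp
  moreover have "(\<Prod>c\<in>path_cells (path_step x (a, b)) w. hook (lambda_odd k) c)
                 = hook_weight (if x then Suc h else h - 1) w"
    using Cons.prems Cons.IH[of "Suc h" "a - 1" b] Cons.IH[of "h - 1" a "b + 1"] by (cases x) auto
  ultimately show ?case
    by (simp add: finite_path_cells)
qed

lemma ups_dyck_prefix: "w \<in> dyck_prefixes L x \<Longrightarrow> 2 * ups w = L + x"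
  using walk_end_count[of 0 w] ups_add_rights[of w] unfolding dyck_prefixes_def by simp

lemma admissible_last_up_iff:
  "admissible k (w @ True # replicate j False) \<longleftrightarrow> j \<le> k \<and> w \<in> dyck_prefixes (2 * k - j) j"
proof
  assume adm: "admissible k (w @ True # replicate j False)"
  then have w: "length w + 1 + j = 2 * k + 1" "ups w = k" "nonneg_walk 0 w"
    unfolding admissible_def by (auto simp: nonneg_walk_append ups_replicate)
  then have "j \<le> k" "walk_end 0 w = j"
    using walk_end_count[OF w(3)] ups_add_rights[of w] by linarith+
  then show "j \<le> k \<and> w \<in> dyck_prefixes (2 * k - j) j"
    using w unfolding dyck_prefixes_def by auto
next
  assume "j \<le> k \<and> w \<in> dyck_prefixes (2 * k - j) j"
  then show "admissible k (w @ True # replicate j False)"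
    using ups_dyck_prefix[of w "2 * k - j" j]
    by (auto simp: admissible_def dyck_prefixes_def nonneg_walk_append nonneg_walk_replicate_False
                   ups_replicate)
qed

lemma admissible_last_up: "admissible k s \<Longrightarrow> \<exists>w j. s = w @ True # replicate j False"
proof -
  assume "admissible k s"
  then have "True \<in> set s"
    unfolding admissible_def by (metis filter_False add_is_0 length_0_conv one_neq_zero)
  then obtain w z where "s = w @ True # z" "True \<notin> set z"
    using split_list_last by metis
  moreover have "z = replicate (length z) False"
    using \<open>True \<notin> set z\<close> by (metis (full_types) replicate_length_same)
  ultimately show ?thesis
    by blast
qed

definition lower_hook_product :: "nat \<Rightarrow> nat" where
  "lower_hook_product k = (\<Prod>c \<in> {c \<in> diagram (lambda_odd k). fst c \<noteq> 1}. hook (lambda_odd k) c)"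

lemma path_complement_last_up:
  assumes "j \<le> k" "w \<in> dyck_prefixes (2 * k - j) j"
  defines "D \<equiv> path_complement k (w @ True # replicate j False)"
  shows "{c \<in> D. fst c = 1} = {1} \<times> {1..k - j}"
    and "{c \<in> D. fst c \<noteq> 1} = {c \<in> diagram (lambda_odd k). fst c \<noteq> 1} - path_cells (k + 2, 1) w"
    and "path_cells (k + 2, 1) w \<subseteq> {c \<in> diagram (lambda_odd k). fst c \<noteq> 1}"
proof -
  have adm: "admissible k (w @ True # replicate j False)"
    using assms(1,2) admissible_last_up_iff by blast
  have "ups w = k"
    using ups_dyck_prefix[OF assms(2)] assms(1) by simp
  then have w_end: "path_end (k + 2, 1) w = (2, k - j + 1)"
    using path_end_eq[of w "(k + 2, 1)"] ups_add_rights[of w] assms(2)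
    by (simp add: dyck_prefixes_def)
  have lower: "c \<in> path_cells (k + 2, 1) w \<Longrightarrow> 2 \<le> fst c" for c
    using path_cells_bound_end[of c "(k + 2, 1)" w] w_end by simp
  then have not_row1: "(1, y) \<notin> path_cells (k + 2, 1) w" for y
    by fastforce
  have cells: "path_cells (k + 2, 1) (w @ True # replicate j False)
               = path_cells (k + 2, 1) w \<union> {1} \<times> {k - j + 1..k + 1}"
    using w_end path_end_mem_path_cells[of "(k + 2, 1)" w] assms(1)
    by (auto simp: path_cells_append path_cells_replicate_False)
  show "path_cells (k + 2, 1) w \<subseteq> {c \<in> diagram (lambda_odd k). fst c \<noteq> 1}"
    using admissible_path_cells_subset[OF adm] lower unfolding cells by fastforce
  show "{c \<in> D. fst c \<noteq> 1} = {c \<in> diagram (lambda_odd k). fst c \<noteq> 1} - path_cells (k + 2, 1) w"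
    unfolding D_def path_complement_def cells by auto
  show "{c \<in> D. fst c = 1} = {1} \<times> {1..k - j}"
    unfolding D_def path_complement_def cells using not_row1 assms(1)
    by (auto simp: diagram_lambda_odd)
qed

lemma excited_row1_card_eq:
  assumes "j \<le> k"
  shows "{D \<in> excited (lambda_odd k) (mu_odd k). card {c \<in> D. fst c = 1} = k - j}
         = (\<lambda>w. path_complement k (w @ True # replicate j False)) ` dyck_prefixes (2 * k - j) j"
proof (intro set_eqI iffI)
  fix D assume D: "D \<in> {D \<in> excited (lambda_odd k) (mu_odd k). card {c \<in> D. fst c = 1} = k - j}"
  then obtain s where s: "admissible k s" "D = path_complement k s"
    using excited_path_complement by blast
  then obtain w j' where s_eq: "s = w @ True # replicate j' False"
    using admissible_last_up by blast
  then have w: "j' \<le> k" "w \<in> dyck_prefixes (2 * k - j') j'"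
    using s(1) admissible_last_up_iff by auto
  then have "card {c \<in> D. fst c = 1} = k - j'"
    using path_complement_last_up(1)[OF w] s(2) s_eq by simp
  then have "j' = j"
    using D w(1) assms by auto
  then show "D \<in> (\<lambda>w. path_complement k (w @ True # replicate j False)) ` dyck_prefixes (2 * k - j) j"
    using w s s_eq by auto
next
  fix D assume "D \<in> (\<lambda>w. path_complement k (w @ True # replicate j False)) ` dyck_prefixes (2 * k - j) j"
  then obtain w where w: "w \<in> dyck_prefixes (2 * k - j) j"
    and D: "D = path_complement k (w @ True # replicate j False)"
    by blast
  have "D \<in> excited (lambda_odd k) (mu_odd k)"
    using path_complement_excited admissible_last_up_iff assms w D by blast
  moreover have "card {c \<in> D. fst c = 1} = k - j"
    using path_complement_last_up(1)[OF assms w] D by simp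
  ultimately show "D \<in> {D \<in> excited (lambda_odd k) (mu_odd k). card {c \<in> D. fst c = 1} = k - j}"
    by simp
qed

lemma inj_on_path_complement: "inj_on (path_complement k) {s. admissible k s}"
proof (rule inj_onI)
  fix s s' assume s: "s \<in> {s. admissible k s}" and s': "s' \<in> {s. admissible k s}"
    and eq: "path_complement k s = path_complement k s'"
  have "path_cells (k + 2, 1) s = path_cells (k + 2, 1) s'"
    using eq admissible_path_cells_subset[of k s] admissible_path_cells_subset[of k s'] s s'
    unfolding path_complement_def by blast
  then show "s = s'"
    using s s' by (intro path_cells_inj) (auto simp: admissible_def)
qed

lemma prod_hook_lower_complement:
  assumes "j \<le> k" "w \<in> dyck_prefixes (2 * k - j) j"
  shows "real (\<Prod>c \<in> {c \<in> diagram (lambda_odd k). fst c \<noteq> 1} - path_cells (k + 2, 1) w. hook (lambda_odd k) c)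
         = real (lower_hook_product k) / real (hook_weight 0 w)"
proof -
  have fin: "finite {c \<in> diagram (lambda_odd k). fst c \<noteq> 1}"
    by (rule finite_subset[of _ "{1..k + 2} \<times> {1..k + 2}"]) (auto simp: diagram_lambda_odd)
  have "lower_hook_product k =
             (\<Prod>c \<in> {c \<in> diagram (lambda_odd k). fst c \<noteq> 1} - path_cells (k + 2, 1) w. hook (lambda_odd k) c)
             * (\<Prod>c\<in>path_cells (k + 2, 1) w. hook (lambda_odd k) c)"
    unfolding lower_hook_product_def by (rule prod.subset_diff[OF path_complement_last_up(3)[OF assms] fin])
  also have "(\<Prod>c\<in>path_cells (k + 2, 1) w. hook (lambda_odd k) c) = hook_weight 0 w"
    using assms ups_dyck_prefix[OF assms(2)] unfolding dyck_prefixes_def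
    by (intro prod_hook_path_cells) auto
  finally show ?thesis
    using hook_weight_pos[of 0 w] by (simp add: field_simps)
qed

lemma sum_excited_row1_card_eq:
  assumes "j \<le> k"
  shows "real (\<Sum>D \<in> {D \<in> excited (lambda_odd k) (mu_odd k). card {c \<in> D. fst c = 1} = k - j}.
                 \<Prod>c \<in> {c \<in> D. fst c \<noteq> 1}. hook (lambda_odd k) c)
         = real (lower_hook_product k) * weight_sum (2 * k - j) j"
proof -
  let ?Q = "\<lambda>w. path_complement k (w @ True # replicate j False)"
  have "inj_on ?Q (dyck_prefixes (2 * k - j) j)"
    using inj_on_path_complement admissible_last_up_iff[of k _ j] assms
    by (auto simp: inj_on_def)
  then have "real (\<Sum>D \<in> ?Q ` dyck_prefixes (2 * k - j) j. \<Prod>c \<in> {c \<in> D. fst c \<noteq> 1}. hook (lambda_odd k) c)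
        = (\<Sum>w \<in> dyck_prefixes (2 * k - j) j. real (\<Prod>c \<in> {c \<in> ?Q w. fst c \<noteq> 1}. hook (lambda_odd k) c))"
    by (simp add: sum.reindex)
  also have "\<dots> = (\<Sum>w \<in> dyck_prefixes (2 * k - j) j. real (lower_hook_product k) / real (hook_weight 0 w))"
    using path_complement_last_up(2)[OF assms] prod_hook_lower_complement[OF assms]
    by (intro sum.cong) simp_all
  also have "\<dots> = real (lower_hook_product k) * weight_sum (2 * k - j) j"
    unfolding weight_sum_def by (simp add: sum_distrib_left)
  finally show ?thesis
    unfolding excited_row1_card_eq[OF assms] .
qed

lemma lower_hook_product_pos: "0 < lower_hook_product k"
  unfolding lower_hook_product_def
  by (intro prod_pos) (auto simp: diagram_lambda_odd hook_lambda_odd)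

lemma NN_coeff_odd_descents:
  "j \<le> k \<Longrightarrow> real (NN_coeff (odd_descents k) j) = real (lower_hook_product k) * weight_sum (2 * k - j) j"
  using sum_excited_row1_card_eq[of j k]
  unfolding NN_coeff_def lambdaI_odd_descents muI_odd_descents sI_odd_descents by simp

theorem proposition7p1:
  fixes k :: nat
  assumes "k \<ge> 1"
  defines "I \<equiv> (\<lambda>i. 2 * i + 1) ` {0..k}"
  shows "sI I = k \<and> NN_coeff I 0 = NN_coeff I 1 \<and>
         (\<forall>j. 1 \<le> j \<and> j < k \<longrightarrow> NN_coeff I (j + 1) < NN_coeff I j)"
proof -
  note coeff = NN_coeff_odd_descents[of _ k, folded I_def]
  have "weight_sum (2 * k) 0 = weight_sum (2 * k - 1) 1"
    using weight_sum_Suc_0[of "2 * k - 1"] assms by (simp add: Suc_diff_Suc)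
  then have "NN_coeff I 0 = NN_coeff I 1"
    using coeff[of 0] coeff[of 1] assms by simp
  moreover have "NN_coeff I (j + 1) < NN_coeff I j" if "1 \<le> j" "j < k" for j
  proof -
    have "weight_sum (2 * k - (j + 1)) (j + 1) < weight_sum (Suc (2 * k - (j + 1))) j"
      using that by (intro weight_sum_Suc_gt) auto
    moreover have "Suc (2 * k - (j + 1)) = 2 * k - j"
      using that by simp
    ultimately have "real (NN_coeff I (j + 1)) < real (NN_coeff I j)"
      using coeff[of j] coeff[of "j + 1"] lower_hook_product_pos[of k] that
      by (simp add: mult_less_cancel_left_pos)
    then show ?thesis
      by simp
  qed
  ultimately show ?thesis
    using sI_odd_descents[of k] unfolding I_def by blast
qed

end
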